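(* In the forking model with more than two alternatives, there exists a forking problem with a monotonic profile that admits no stable assignment.
   Context: A forking problem consists of agents $V=\{v_1,\dots,v_n\}$ and a finite set $M$ of alternatives. Each agent $v_i$ has a strict total order $\succ_i$ on $M\times\{1,\dots,n\}$, where $(S,j)$ means being in the community adopting alternative $S$, of size $j$ (including oneself); it is monotonic if $(S,j)\succ_i(S,k)$ for all $S\in M$ and $1\le k<j\le n$. An assignment is a map $f:V\to M$; $v_i$ prefers $f$ to $g$ if $(f(v_i),|f^{-1}(f(v_i))|)\succ_i(g(v_i),|g^{-1}(g(v_i))|)$. An assignment $f$ is stable if there is no assignment $f'\neq f$ such that every agent $v_i$ with $f'(v_i)\neq f(v_i)$ prefers $f'$ to $f$. *)

theory Defs
  imports Main "HOL-Library.FuncSet"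
begin

text \<open>Agents are 0,...,n-1; alternatives form a finite set M.
  P i is the strict preference of agent i on M x {1..n}:
  (x, y) in P i means x is strictly preferred to y by agent i.\<close>

definition forking_problem :: "'a set \<Rightarrow> nat \<Rightarrow> (nat \<Rightarrow> ('a \<times> nat) rel) \<Rightarrow> bool" where
  "forking_problem M n P \<longleftrightarrow> finite M \<and> n \<ge> 1 \<and>
     (\<forall>i<n. P i \<subseteq> (M \<times> {1..n}) \<times> (M \<times> {1..n}) \<and>
            strict_linear_order_on (M \<times> {1..n}) (P i))"

definition monotonic :: "'a set \<Rightarrow> nat \<Rightarrow> (nat \<Rightarrow> ('a \<times> nat) rel) \<Rightarrow> bool" where
  "monotonic M n P \<longleftrightarrow>
     (\<forall>i<n. \<forall>S\<in>M. \<forall>j k. 1 \<le> k \<and> k < j \<and> j \<le> n \<longrightarrow> ((S, j), (S, k)) \<in> P i)"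

definition assignment :: "'a set \<Rightarrow> nat \<Rightarrow> (nat \<Rightarrow> 'a) \<Rightarrow> bool" where
  "assignment M n f \<longleftrightarrow> f \<in> {0..<n} \<rightarrow>\<^sub>E M"

definition comm_size :: "nat \<Rightarrow> (nat \<Rightarrow> 'a) \<Rightarrow> nat \<Rightarrow> nat" where
  "comm_size n f i = card {j \<in> {0..<n}. f j = f i}"

definition prefers :: "nat \<Rightarrow> (nat \<Rightarrow> ('a \<times> nat) rel) \<Rightarrow> nat \<Rightarrow> (nat \<Rightarrow> 'a) \<Rightarrow> (nat \<Rightarrow> 'a) \<Rightarrow> bool" where
  "prefers n P i f g \<longleftrightarrow> ((f i, comm_size n f i), (g i, comm_size n g i)) \<in> P i"

definition stable :: "'a set \<Rightarrow> nat \<Rightarrow> (nat \<Rightarrow> ('a \<times> nat) rel) \<Rightarrow> (nat \<Rightarrow> 'a) \<Rightarrow> bool" where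
  "stable M n P f \<longleftrightarrow> assignment M n f \<and>
     \<not> (\<exists>f'. assignment M n f' \<and> f' \<noteq> f \<and>
            (\<forall>i<n. f' i \<noteq> f i \<longrightarrow> prefers n P i f' f))"

end

theory Submission
  imports Defs
begin

text \<open>Three agents and three distinct alternatives a, b, c suffice. Every agent ranks every
  community at a, b or c above every community elsewhere, so from an assignment that uses
  another alternative some agent profitably moves to a. On the 27 assignments into {a, b, c} the
  preferences given by \<open>core_util\<close> always admit a (possibly joint) profitable deviation, as an
  exhaustive check shows. The remaining alternatives are ranked through an injection into the
  naturals, so all preferences are strict linear orders, and all utilities increase with the
  size of the community, so the profile is monotonic.\<close>

definition utility_pref :: "'b set \<Rightarrow> ('b \<Rightarrow> 'c::linorder) \<Rightarrow> 'b rel" where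
  "utility_pref A u = {(p, q). p \<in> A \<and> q \<in> A \<and> u q < u p}"

lemma strict_linear_order_on_utility_pref:
  assumes "inj_on u A"
  shows "strict_linear_order_on A (utility_pref A u)"
  unfolding strict_linear_order_on_def trans_def irrefl_def total_on_def utility_pref_def
  using assms by (auto simp: inj_on_def dest: order.strict_trans) (meson linorder_neqE)

lemma forking_problem_utility_pref:
  assumes "finite M" "1 \<le> n" "\<And>i. i < n \<Longrightarrow> inj_on (u i) (M \<times> {1..n})"
  shows "forking_problem M n (\<lambda>i. utility_pref (M \<times> {1..n}) (u i))"
  using assms strict_linear_order_on_utility_pref
  unfolding forking_problem_def by (auto simp: utility_pref_def)

lemma monotonic_utility_pref:
  assumes "\<And>i S k j. i < n \<Longrightarrow> S \<in> M \<Longrightarrow> 1 \<le> k \<Longrightarrow> k < j \<Longrightarrow> j \<le> n \<Longrightarrow> u i (S, k) < u i (S, j)"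
  shows "monotonic M n (\<lambda>i. utility_pref (M \<times> {1..n}) (u i))"
  using assms unfolding monotonic_def utility_pref_def by auto

lemma comm_size_bounds:
  assumes "i < n"
  shows "1 \<le> comm_size n f i" "comm_size n f i \<le> n"
proof -
  have "card {i} \<le> comm_size n f i"
    unfolding comm_size_def using assms by (intro card_mono) auto
  then show "1 \<le> comm_size n f i" by simp
  have "comm_size n f i \<le> card {0..<n}"
    unfolding comm_size_def by (intro card_mono) auto
  then show "comm_size n f i \<le> n" by simp
qed

lemma comm_size_cong:
  assumes "\<And>j. j < n \<Longrightarrow> f j = g j" "i < n"
  shows "comm_size n f i = comm_size n g i"
proof -
  have "{j \<in> {0..<n}. f j = f i} = {j \<in> {0..<n}. g j = g i}" using assms by auto
  then show ?thesis unfolding comm_size_def by simp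
qed

lemma comm_size_comp:
  assumes "inj_on h (f ` {..<n})" "i < n"
  shows "comm_size n (h \<circ> f) i = comm_size n f i"
proof -
  have "{j \<in> {0..<n}. h (f j) = h (f i)} = {j \<in> {0..<n}. f j = f i}"
    using assms by (auto dest: inj_onD)
  then show ?thesis unfolding comm_size_def by simp
qed

lemma comm_size_3:
  "comm_size 3 f i = (if f 0 = f i then 1 else 0) + (if f 1 = f i then 1 else 0) + (if f 2 = f i then 1 else 0)"
proof -
  have "{0..<3::nat} = {0, 1, 2}" by auto
  then have "{j \<in> {0..<3::nat}. f j = f i} =
      (if f 0 = f i then {0} else {}) \<union> (if f 1 = f i then {1} else {}) \<union> (if f 2 = f i then {2} else {})"
    by (auto split: if_splits intro: gr0I)
  then show ?thesis unfolding comm_size_def by (simp add: card_Un_disjoint)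
qed

lemma assignment_upd:
  assumes "assignment M n f" "i < n" "v \<in> M"
  shows "assignment M n (f(i := v))"
  using assms unfolding assignment_def by (auto simp: PiE_def extensional_def)

definition improving_deviation :: "nat \<Rightarrow> (nat \<Rightarrow> 'a \<times> nat \<Rightarrow> 'c::linorder) \<Rightarrow> (nat \<Rightarrow> 'a) \<Rightarrow> (nat \<Rightarrow> 'a) \<Rightarrow> bool" where
  "improving_deviation n u f f' \<longleftrightarrow> (\<exists>i<n. f' i \<noteq> f i) \<and>
     (\<forall>i<n. f' i \<noteq> f i \<longrightarrow> u i (f i, comm_size n f i) < u i (f' i, comm_size n f' i))"

lemma not_stable_if_improving_deviation:
  assumes f': "assignment M n f'" and dev: "improving_deviation n u f f'"
  shows "\<not> stable M n (\<lambda>i. utility_pref (M \<times> {1..n}) (u i)) f"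
proof
  assume st: "stable M n (\<lambda>i. utility_pref (M \<times> {1..n}) (u i)) f"
  then have f: "assignment M n f" unfolding stable_def by simp
  have "f' \<noteq> f" using dev unfolding improving_deviation_def by blast
  moreover have "prefers n (\<lambda>i. utility_pref (M \<times> {1..n}) (u i)) i f' f" if "i < n" "f' i \<noteq> f i" for i
  proof -
    have "f i \<in> M" "f' i \<in> M"
      using f f' that(1) unfolding assignment_def by (simp_all add: PiE_iff)
    moreover have "u i (f i, comm_size n f i) < u i (f' i, comm_size n f' i)"
      using dev that unfolding improving_deviation_def by blast
    ultimately show ?thesis
      using comm_size_bounds[OF that(1), of f] comm_size_bounds[OF that(1), of f']
      unfolding prefers_def utility_pref_def by simp
  qed
  ultimately show False using st f' unfolding stable_def by blast
qed

lemma improving_deviation_cong: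
  assumes "\<And>j. j < n \<Longrightarrow> f j = g j" "\<And>j. j < n \<Longrightarrow> f' j = g' j"
  shows "improving_deviation n u f f' \<longleftrightarrow> improving_deviation n u g g'"
  unfolding improving_deviation_def using assms comm_size_cong[of n f g] comm_size_cong[of n f' g']
  by auto

lemma improving_deviation_comp:
  assumes dev: "improving_deviation n u f f'" and inj: "inj_on h S"
    and ranges: "f ` {..<n} \<subseteq> S" "f' ` {..<n} \<subseteq> S"
    and u': "\<And>i s k. s \<in> S \<Longrightarrow> u' i (h s, k) = u i (s, k)"
  shows "improving_deviation n u' (h \<circ> f) (h \<circ> f')"
proof -
  have size: "comm_size n (h \<circ> f) i = comm_size n f i" "comm_size n (h \<circ> f') i = comm_size n f' i"
    if "i < n" for i
    using comm_size_comp inj_on_subset[OF inj] ranges that by metis+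
  have moved: "h (f' i) \<noteq> h (f i) \<longleftrightarrow> f' i \<noteq> f i" if "i < n" for i
    using inj ranges that by (metis image_subset_iff inj_onD lessThan_iff)
  have "u' i (h (f i), k) = u i (f i, k)" "u' i (h (f' i), k) = u i (f' i, k)" if "i < n" for i k
    using u' ranges that by blast+
  then show ?thesis
    using dev size moved unfolding improving_deviation_def by auto
qed

lemma less_3_iff: "(i::nat) < 3 \<longleftrightarrow> i = 0 \<or> i = 1 \<or> i = 2"
  by auto

lemma all_less_3: "(\<forall>i<3::nat. P i) \<longleftrightarrow> P 0 \<and> P 1 \<and> P 2"
  unfolding less_3_iff by auto

lemma ex_less_3: "(\<exists>i<3::nat. P i) \<longleftrightarrow> P 0 \<or> P 1 \<or> P 2"
  unfolding less_3_iff by auto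

text \<open>Each agent ranks its nine options (s, k), s < 3 and 1 \<le> k \<le> 3, from 1 (worst) to 9 (best).\<close>

definition core_util :: "nat \<Rightarrow> nat \<times> nat \<Rightarrow> int" where
  "core_util i = (\<lambda>(s, k).
     [[[2, 6, 8], [1, 3, 4], [5, 7, 9]],
      [[2, 3, 4], [1, 8, 9], [5, 6, 7]],
      [[5, 8, 9], [1, 6, 7], [2, 3, 4]]] ! i ! s ! (k - 1))"

lemma core_util_pos:
  assumes "i < 3" "s < 3" "k \<in> {1..3}"
  shows "0 < core_util i (s, k)"
proof -
  have "k = 1 \<or> k = 2 \<or> k = 3" using assms(3) by auto
  then show ?thesis using assms(1,2) unfolding less_3_iff by (auto simp: core_util_def)
qed

lemma core_util_strict_mono:
  assumes "i < 3" "s < 3" "1 \<le> k" "k < j" "j \<le> 3"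
  shows "core_util i (s, k) < core_util i (s, j)"
proof -
  have "k = 1 \<and> j = 2 \<or> k = 1 \<and> j = 3 \<or> k = 2 \<and> j = 3" using assms(3-5) by auto
  then show ?thesis using assms(1,2) unfolding less_3_iff by (auto simp: core_util_def)
qed

lemma inj_on_core_util:
  assumes "i < 3"
  shows "inj_on (core_util i) ({..<3} \<times> {1..3})"
proof (rule inj_onI, clarify)
  fix s k t l :: nat
  assume "s < 3" "t < 3" "k \<in> {1..3}" "l \<in> {1..3}" "core_util i (s, k) = core_util i (t, l)"
  moreover have "k = 1 \<or> k = 2 \<or> k = 3" "l = 1 \<or> l = 2 \<or> l = 3" using calculation(3,4) by auto
  ultimately show "s = t \<and> k = l"
    using assms unfolding less_3_iff by (elim disjE) (simp_all add: core_util_def)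
qed

lemma core_util_improving_deviation:
  assumes "\<sigma> ` {..<3} \<subseteq> {..<3}"
  obtains \<sigma>' where "\<sigma>' ` {..<3} \<subseteq> {..<3}" "improving_deviation 3 core_util \<sigma> \<sigma>'"
proof -
  have "\<forall>x<3. \<forall>y<3. \<forall>z<3. \<exists>x'<3. \<exists>y'<3. \<exists>z'<3.
      improving_deviation 3 core_util ((!) [x, y, z]) ((!) [x', y', z'])"
    unfolding improving_deviation_def comm_size_3 all_less_3 ex_less_3 by (simp add: core_util_def)
  moreover have "\<sigma> 0 < 3" "\<sigma> 1 < 3" "\<sigma> 2 < 3" using assms by (auto simp: image_subset_iff)
  ultimately obtain x' y' z' where "x' < 3" "y' < 3" "z' < 3"
    and dev: "improving_deviation 3 core_util ((!) [\<sigma> 0, \<sigma> 1, \<sigma> 2]) ((!) [x', y', z'])"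
    by blast
  then have "\<forall>j<3. [x', y', z'] ! j < 3" unfolding all_less_3 by simp
  then have range: "(!) [x', y', z'] ` {..<3} \<subseteq> {..<3}" by auto
  have "[\<sigma> 0, \<sigma> 1, \<sigma> 2] ! j = \<sigma> j" if "j < 3" for j
    using that by (auto simp: less_3_iff)
  then have "improving_deviation 3 core_util \<sigma> ((!) [x', y', z'])"
    using dev improving_deviation_cong[of 3 "(!) [\<sigma> 0, \<sigma> 1, \<sigma> 2]" \<sigma> "(!) [x', y', z']" "(!) [x', y', z']"]
    by blast
  with range show ?thesis using that by blast
qed

text \<open>An alternative x other than a, b, c gets utilities between -3 g x - 2 and -3 g x: all are
  nonpositive, hence below those of \<open>core_util\<close>, and pairwise distinct when g is injective.\<close>

definition forking_util :: "'a \<Rightarrow> 'a \<Rightarrow> 'a \<Rightarrow> ('a \<Rightarrow> nat) \<Rightarrow> nat \<Rightarrow> 'a \<times> nat \<Rightarrow> int" where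
  "forking_util a b c g i = (\<lambda>(x, k).
     if x = a then core_util i (0, k) else if x = b then core_util i (1, k)
     else if x = c then core_util i (2, k) else int k - 3 * int (g x) - 3)"

lemma forking_util_nth:
  assumes "distinct [a, b, c]" "s < 3"
  shows "forking_util a b c g i ([a, b, c] ! s, k) = core_util i (s, k)"
  using assms unfolding less_3_iff by (auto simp: forking_util_def)

lemma forking_util_nonpos:
  assumes "x \<notin> {a, b, c}" "k \<le> 3"
  shows "forking_util a b c g i (x, k) \<le> 0"
  using assms by (simp add: forking_util_def)

lemma in_abc_conv_nth:
  assumes "x \<in> {a, b, c}"
  obtains s where "s < 3" "x = [a, b, c] ! s"
  using assms by (metis in_set_conv_nth length_Cons list.size(3) numeral_3_eq_3 set_simps)

lemma inj_on_forking_util: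
  assumes "distinct [a, b, c]" "inj_on g M" "i < 3"
  shows "inj_on (forking_util a b c g i) (M \<times> {1..3})"
proof (rule inj_onI, clarify)
  fix x k y l
  assume "x \<in> M" "y \<in> M" and k: "k \<in> {1..3}" and l: "l \<in> {1..3}"
    and eq: "forking_util a b c g i (x, k) = forking_util a b c g i (y, l)"
  show "x = y \<and> k = l"
  proof (cases "x \<in> {a, b, c}"; cases "y \<in> {a, b, c}")
    assume "x \<in> {a, b, c}" "y \<in> {a, b, c}"
    then obtain s t where st: "s < 3" "x = [a, b, c] ! s" "t < 3" "y = [a, b, c] ! t"
      by (metis in_abc_conv_nth)
    then have "core_util i (s, k) = core_util i (t, l)"
      using eq forking_util_nth[OF assms(1)] by metis
    then have "s = t \<and> k = l"
      using inj_onD[OF inj_on_core_util[OF assms(3)]] st k l by blast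
    then show ?thesis using st by simp
  next
    assume "x \<notin> {a, b, c}" "y \<notin> {a, b, c}"
    then have "int k - 3 * int (g x) = int l - 3 * int (g y)"
      using eq by (simp add: forking_util_def)
    then have "k = l \<and> g x = g y" using k l unfolding atLeastAtMost_iff by presburger
    then show ?thesis using inj_onD[OF assms(2)] \<open>x \<in> M\<close> \<open>y \<in> M\<close> by blast
  next
    assume "x \<in> {a, b, c}" "y \<notin> {a, b, c}"
    then show ?thesis
      using eq forking_util_nonpos[of y a b c l g i] l core_util_pos[OF assms(3) _ k]
        forking_util_nth[OF assms(1)] by (metis in_abc_conv_nth atLeastAtMost_iff not_le)
  next
    assume "x \<notin> {a, b, c}" "y \<in> {a, b, c}"
    then show ?thesis
      using eq forking_util_nonpos[of x a b c k g i] k core_util_pos[OF assms(3) _ l]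
        forking_util_nth[OF assms(1)] by (metis in_abc_conv_nth atLeastAtMost_iff not_le)
  qed
qed

lemma forking_util_strict_mono:
  assumes "distinct [a, b, c]" "i < 3" "1 \<le> k" "k < j" "j \<le> 3"
  shows "forking_util a b c g i (x, k) < forking_util a b c g i (x, j)"
proof (cases "x \<in> {a, b, c}")
  case True
  then show ?thesis
    using assms forking_util_nth core_util_strict_mono by (metis in_abc_conv_nth)
next
  case False
  then show ?thesis using assms(4) by (simp add: forking_util_def)
qed

lemma improving_deviation_into_abc:
  assumes "distinct [a, b, c]" "i < 3" "f i \<notin> {a, b, c}"
  shows "improving_deviation 3 (forking_util a b c g) f (f(i := a))"
proof -
  have "forking_util a b c g i (f i, comm_size 3 f i) \<le> 0"
    using forking_util_nonpos[OF assms(3)] comm_size_bounds[OF assms(2)] by blast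
  also have "0 < forking_util a b c g i (a, comm_size 3 (f(i := a)) i)"
    using forking_util_nth[OF assms(1), of 0] core_util_pos[OF assms(2), of 0]
      comm_size_bounds[OF assms(2), of "f(i := a)"] by simp
  finally show ?thesis
    using assms(2,3) unfolding improving_deviation_def by auto
qed

lemma improving_deviation_within_abc:
  assumes abc: "distinct [a, b, c]" "{a, b, c} \<subseteq> M" and f: "\<And>j. j < 3 \<Longrightarrow> f j \<in> {a, b, c}"
  obtains f' where "assignment M 3 f'" "improving_deviation 3 (forking_util a b c g) f f'"
proof -
  let ?alt = "(!) [a, b, c]"
  have bij: "bij_betw ?alt {..<3} {a, b, c}" by (rule bij_betw_nth[OF abc(1)]) auto
  define \<sigma> where "\<sigma> = inv_into {..<3} ?alt \<circ> f"
  have \<sigma>: "\<sigma> ` {..<3} \<subseteq> {..<3}" and f_eq: "\<And>j. j < 3 \<Longrightarrow> (?alt \<circ> \<sigma>) j = f j"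
    using f bij_betw_apply[OF bij_betw_inv_into[OF bij]] bij_betw_inv_into_right[OF bij]
    unfolding \<sigma>_def by auto
  obtain \<sigma>' where \<sigma>': "\<sigma>' ` {..<3} \<subseteq> {..<3}" "improving_deviation 3 core_util \<sigma> \<sigma>'"
    using core_util_improving_deviation[OF \<sigma>] by blast
  define f' where "f' = restrict (?alt \<circ> \<sigma>') {0..<3}"
  have "improving_deviation 3 (forking_util a b c g) (?alt \<circ> \<sigma>) (?alt \<circ> \<sigma>')"
    using \<sigma> \<sigma>' bij_betw_imp_inj_on[OF bij] forking_util_nth[OF abc(1)]
    by (intro improving_deviation_comp[where S = "{..<3}"]) auto
  moreover have "(?alt \<circ> \<sigma>') j = f' j" if "j < 3" for j
    using that unfolding f'_def by simp
  ultimately have dev: "improving_deviation 3 (forking_util a b c g) f f'"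
    using f_eq improving_deviation_cong[of 3 "?alt \<circ> \<sigma>" f "?alt \<circ> \<sigma>'" f'] by blast
  have "?alt (\<sigma>' j) \<in> M" if "j < 3" for j
    using \<sigma>'(1) that bij_betw_apply[OF bij] abc(2) by blast
  then have "assignment M 3 f'" unfolding assignment_def f'_def by auto
  with dev show ?thesis using that by blast
qed

lemma not_stable_forking_util:
  assumes abc: "distinct [a, b, c]" "{a, b, c} \<subseteq> M"
  shows "\<not> stable M 3 (\<lambda>i. utility_pref (M \<times> {1..3}) (forking_util a b c g i)) f"
proof
  assume st: "stable M 3 (\<lambda>i. utility_pref (M \<times> {1..3}) (forking_util a b c g i)) f"
  then have f: "assignment M 3 f" unfolding stable_def by simp
  show False
  proof (cases "\<exists>i<3. f i \<notin> {a, b, c}")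
    case True
    then obtain i where i: "i < 3" "f i \<notin> {a, b, c}" by blast
    then show False
      using st not_stable_if_improving_deviation[OF assignment_upd[OF f i(1)]]
        improving_deviation_into_abc[OF abc(1), of i f] abc(2) by blast
  next
    case False
    then obtain f' where "assignment M 3 f'" "improving_deviation 3 (forking_util a b c g) f f'"
      using improving_deviation_within_abc[OF abc] by blast
    then show False using st not_stable_if_improving_deviation by blast
  qed
qed

theorem proposition3:
  fixes M :: "'a set"
  assumes "finite M" and "card M > 2"
  shows "\<exists>n P. forking_problem M n P \<and> monotonic M n P \<and> \<not> (\<exists>f. stable M n P f)"
proof -
  obtain T where "T \<subseteq> M" "card T = 3"
    using obtain_subset_with_card_n[of 3 M] assms(2) by auto
  then obtain a b c where abc: "distinct [a, b, c]" "{a, b, c} \<subseteq> M"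
    unfolding card_3_iff by auto
  obtain g :: "'a \<Rightarrow> nat" where g: "inj_on g M"
    using finite_imp_inj_to_nat_seg[OF assms(1)] by blast
  let ?P = "\<lambda>i. utility_pref (M \<times> {1..3}) (forking_util a b c g i)"
  have "forking_problem M 3 ?P"
    using assms(1) inj_on_forking_util[OF abc(1) g] by (intro forking_problem_utility_pref) auto
  moreover have "monotonic M 3 ?P"
    using forking_util_strict_mono[OF abc(1)] by (intro monotonic_utility_pref)
  moreover have "\<not> (\<exists>f. stable M 3 ?P f)"
    using not_stable_forking_util[OF abc] by blast
  ultimately show ?thesis by blast
qed

end
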